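(* Suppose Assumptions A, B($\gamma$), C($\gamma$) are satisfied for some $\gamma\in(0,1]$. Then for any $\tau,R\in(0,\infty)$, $$\int_{-\tau}^{\tau}\int_{B_R(0)}\big(|\mathfrak{b}_s(x)|^{p'}+|b_s(x)|^{p'}+c_s^{p'}(x)\big)\,dx\,ds<\infty.$$
   Context: Fix $d\ge1$, $p\in(1,\infty)$, $p'=p/(p-1)$. $B_\rho(x)$ is the open ball in $\mathbb{R}^d$. Coefficients $a^{ij}_t(x),\mathfrak{b}^i_t(x),b^i_t(x),c_t(x)$ on $\mathbb{R}\times\mathbb{R}^d$; $\mathfrak{b}=(\mathfrak{b}^i)$, $b=(b^i)$. Fixed constants: $K\ge0$, $\rho_0,\rho_1\in(0,1]$, $q=q(d,p)$ with $q>\min(d,p)$, $q>\min(d,p')$, $q\ge\max(d,p,p')$. Assumption A: (i) $a,\mathfrak{b},b,c$ real-valued Borel measurable, $c\ge0$; (ii) there is $\delta>0$ with $a^{ij}\xi^i\xi^j\ge\delta|\xi|^2$, $|a^{ij}|\le\delta^{-1}$; (iii) for every $x$, $t\mapsto\int_{B_1(0)}(|\mathfrak{b}_t(x+y)|+|b_t(x+y)|+c_t(x+y))\,dy$ is locally integrable to the power $p'$ on $\mathbb{R}$. Assumption B($\gamma$): for all $(t,x)$, $\int_{B_{\rho_1}(x)}\int_{B_{\rho_1}(x)}(|\mathfrak{b}_t(y)-\mathfrak{b}_t(z)|^q+|b_t(y)-b_t(z)|^q+|c_t(y)-c_t(z)|^q)\,dy\,dz\le K1_{q>d}+\rho_1^d\gamma$.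 Assumption C($\gamma$): for all $\rho\in(0,\rho_0]$, $s\in\mathbb{R}$, $i,j$: $\rho^{-2d-2}\int_s^{s+\rho^2}\sup_{x}\int_{B_\rho(x)}\int_{B_\rho(x)}|a^{ij}_t(y)-a^{ij}_t(z)|\,dy\,dz\,dt\le\gamma$. *)

theory Defs
  imports "HOL-Analysis.Analysis"
begin

text \<open>Setting: the space R^d is modelled as real^'n with d = CARD('n) (so d >= 1).
  Coefficients: a t x i j = a^{ij}_t(x); fb t x = \<frak>b_t(x) (vector); b t x = b_t(x); c t x = c_t(x).\<close>

definition conj_exp :: "real \<Rightarrow> real" where
  "conj_exp p = p / (p - 1)"

definition assumptionA ::
  "real \<Rightarrow> (real \<Rightarrow> real^'n \<Rightarrow> 'n \<Rightarrow> 'n \<Rightarrow> real) \<Rightarrow> (real \<Rightarrow> real^'n \<Rightarrow> real^'n)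
   \<Rightarrow> (real \<Rightarrow> real^'n \<Rightarrow> real^'n) \<Rightarrow> (real \<Rightarrow> real^'n \<Rightarrow> real) \<Rightarrow> bool" where
  "assumptionA p a fb b c \<longleftrightarrow>
     \<comment> \<open>(i) Borel measurability (jointly in (t,x)) and c >= 0\<close>
     (\<forall>i j. (\<lambda>(t,x). a t x i j) \<in> borel_measurable (borel :: (real \<times> (real^'n)) measure)) \<and>
     (\<lambda>(t,x). fb t x) \<in> borel_measurable (borel :: (real \<times> (real^'n)) measure) \<and>
     (\<lambda>(t,x). b t x) \<in> borel_measurable (borel :: (real \<times> (real^'n)) measure) \<and>
     (\<lambda>(t,x). c t x) \<in> borel_measurable (borel :: (real \<times> (real^'n)) measure) \<and>
     (\<forall>t x. c t x \<ge> 0) \<and>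
     \<comment> \<open>(ii) uniform ellipticity and boundedness\<close>
     (\<exists>\<delta>>0. \<forall>t x. (\<forall>\<xi>::real^'n. (\<Sum>i\<in>UNIV. \<Sum>j\<in>UNIV. a t x i j * \<xi>$i * \<xi>$j) \<ge> \<delta> * (norm \<xi>)\<^sup>2)
                  \<and> (\<forall>i j. \<bar>a t x i j\<bar> \<le> 1 / \<delta>)) \<and>
     \<comment> \<open>(iii) for every x, t \<mapsto> \<integral>_{B_1(0)} (|fb_t(x+y)| + |b_t(x+y)| + c_t(x+y)) dy is in L^{p'}_loc(R)\<close>
     (\<forall>x::real^'n. \<forall>\<alpha> \<beta>::real.
        let F = (\<lambda>t. \<integral>\<^sup>+ y \<in> ball 0 1. ennreal (norm (fb t (x + y)) + norm (b t (x + y)) + c t (x + y)) \<partial>lborel)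
        in (AE t \<in> {\<alpha>..\<beta>} in lborel. F t < \<infinity>) \<and>
           (\<integral>\<^sup>+ t \<in> {\<alpha>..\<beta>}. ennreal (enn2real (F t) powr conj_exp p) \<partial>lborel) < \<infinity>)"

definition assumptionB ::
  "real \<Rightarrow> real \<Rightarrow> real \<Rightarrow> real \<Rightarrow> (real \<Rightarrow> real^'n \<Rightarrow> real^'n)
   \<Rightarrow> (real \<Rightarrow> real^'n \<Rightarrow> real^'n) \<Rightarrow> (real \<Rightarrow> real^'n \<Rightarrow> real) \<Rightarrow> bool" where
  "assumptionB q K \<rho>\<^sub>1 \<gamma> fb b c \<longleftrightarrow>
     (\<forall>t x::real^'n.
        (\<integral>\<^sup>+ y \<in> ball x \<rho>\<^sub>1. \<integral>\<^sup>+ z \<in> ball x \<rho>\<^sub>1.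
            ennreal (norm (fb t y - fb t z) powr q + norm (b t y - b t z) powr q
                     + \<bar>c t y - c t z\<bar> powr q) \<partial>lborel \<partial>lborel)
        \<le> ennreal (K * (if q > real CARD('n) then 1 else 0) + \<rho>\<^sub>1 ^ CARD('n) * \<gamma>))"

definition assumptionC ::
  "real \<Rightarrow> real \<Rightarrow> (real \<Rightarrow> real^'n \<Rightarrow> 'n \<Rightarrow> 'n \<Rightarrow> real) \<Rightarrow> bool" where
  "assumptionC \<rho>\<^sub>0 \<gamma> a \<longleftrightarrow>
     (\<forall>\<rho> s i j. 0 < \<rho> \<and> \<rho> \<le> \<rho>\<^sub>0 \<longrightarrow>
        ennreal (\<rho> powr (- 2 * real CARD('n) - 2)) *
        (\<integral>\<^sup>+ t \<in> {s..s + \<rho>\<^sup>2}. (SUP x::real^'n. \<integral>\<^sup>+ y \<in> ball x \<rho>. \<integral>\<^sup>+ z \<in> ball x \<rho>.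
              ennreal \<bar>a t y i j - a t z i j\<bar> \<partial>lborel \<partial>lborel) \<partial>lborel)
        \<le> ennreal \<gamma>)"

end

theory Submission
  imports Defs
begin

text \<open>
  Fix a time s and a ball B of radius \<rho>1. Assumption B bounds the double integral over B \<times> B
  of the q-th powers of the oscillations of the coefficients, and Assumption A bounds their
  L1 norm G(s) on B. Averaging gives a point y0 in B at which both the oscillation integral
  over z of |f(y0) - f(z)|^q and |f(y0)| are at most a constant multiple of their averages.
  Writing f(z) = f(y0) + (f(z) - f(y0)) and using p' \<le> q then gives an L^p' bound
  C (1 + G(s)^p') on B with C independent of s. Cover B_R(0) by finitely many such balls and
  integrate in s: the bound is finite because G is locally L^p' in time by Assumption A.
\<close>

lemma powr_add_le:
  fixes a b r :: real
  assumes "0 \<le> a" "0 \<le> b" "0 \<le> r"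
  shows "(a + b) powr r \<le> 2 powr r * (a powr r + b powr r)"
proof -
  have "(a + b) powr r \<le> (2 * max a b) powr r"
    using assms by (intro powr_mono2) auto
  also have "\<dots> = 2 powr r * max a b powr r"
    using assms by (simp add: powr_mult)
  also have "\<dots> \<le> 2 powr r * (a powr r + b powr r)"
    by (intro mult_left_mono) (auto simp: max_def)
  finally show ?thesis .
qed

lemma powr_le_one_plus_powr:
  fixes w r q :: real
  assumes "0 \<le> w" "0 \<le> r" "r \<le> q"
  shows "w powr r \<le> 1 + w powr q"
proof (cases "w \<le> 1")
  case True
  then have "w powr r \<le> 1 powr r"
    using assms by (intro powr_mono2) auto
  then have "w powr r \<le> 1" by simp
  then show ?thesis
    using powr_ge_zero[of w q] by linarith
next
  case False
  then have "w powr r \<le> w powr q"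
    using assms by (intro powr_mono) auto
  then show ?thesis by simp
qed

lemma powr_le_of_le_add:
  fixes u v w r q :: real
  assumes "0 \<le> u" "0 \<le> v" "0 \<le> w" "u \<le> v + w" "0 \<le> r" "r \<le> q"
  shows "u powr r \<le> 2 powr r * (1 + v powr r + w powr q)"
proof -
  have "u powr r \<le> (v + w) powr r"
    using assms by (intro powr_mono2) auto
  also have "\<dots> \<le> 2 powr r * (v powr r + w powr r)"
    using assms by (intro powr_add_le)
  also have "\<dots> \<le> 2 powr r * (1 + v powr r + w powr q)"
    using powr_le_one_plus_powr[OF \<open>0 \<le> w\<close> \<open>0 \<le> r\<close> \<open>r \<le> q\<close>] by (intro mult_left_mono) auto
  finally show ?thesis .
qed

lemma powr_le_scaled_one_plus_powr:
  fixes x c G r :: real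
  assumes "0 \<le> x" "x \<le> c * (G + 1)" "0 \<le> c" "0 \<le> G" "0 \<le> r"
  shows "x powr r \<le> (2 * c) powr r * (1 + G powr r)"
proof -
  have "x powr r \<le> (c * (G + 1)) powr r"
    using assms by (intro powr_mono2) auto
  also have "\<dots> = c powr r * (G + 1) powr r"
    using assms by (simp add: powr_mult)
  also have "\<dots> \<le> c powr r * (2 powr r * (G powr r + 1 powr r))"
    using assms by (intro mult_left_mono powr_add_le) auto
  also have "\<dots> = (2 * c) powr r * (1 + G powr r)"
    using assms by (simp add: powr_mult algebra_simps)
  finally show ?thesis .
qed

lemma powr_sum_le_oscillation:
  fixes u1 u2 v1 v2 :: "'a::real_normed_vector" and u3 v3 r q :: real
  assumes "0 \<le> u3" "0 \<le> v3" "0 \<le> r" "r \<le> q"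
  shows "norm u1 powr r + norm u2 powr r + u3 powr r
    \<le> 3 * 2 powr r * (1 + (norm v1 + norm v2 + v3) powr r
                       + (norm (v1 - u1) powr q + norm (v2 - u2) powr q + \<bar>v3 - u3\<bar> powr q))"
proof -
  define s where "s = norm v1 + norm v2 + v3"
  have "s \<ge> 0" "norm v1 \<le> s" "norm v2 \<le> s" "v3 \<le> s"
    using assms by (auto simp: s_def)
  have "norm u1 \<le> norm v1 + norm (v1 - u1)"
    using norm_triangle_ineq4[of v1 "v1 - u1"] by simp
  then have 1: "norm u1 powr r \<le> 2 powr r * (1 + s powr r + norm (v1 - u1) powr q)"
    using \<open>norm v1 \<le> s\<close> \<open>s \<ge> 0\<close> assms by (intro powr_le_of_le_add) auto
  have "norm u2 \<le> norm v2 + norm (v2 - u2)"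
    using norm_triangle_ineq4[of v2 "v2 - u2"] by simp
  then have 2: "norm u2 powr r \<le> 2 powr r * (1 + s powr r + norm (v2 - u2) powr q)"
    using \<open>norm v2 \<le> s\<close> \<open>s \<ge> 0\<close> assms by (intro powr_le_of_le_add) auto
  have 3: "u3 powr r \<le> 2 powr r * (1 + s powr r + \<bar>v3 - u3\<bar> powr q)"
    using \<open>v3 \<le> s\<close> \<open>s \<ge> 0\<close> assms by (intro powr_le_of_le_add) auto
  have "0 \<le> 2 powr r * norm (v1 - u1) powr q" "0 \<le> 2 powr r * norm (v2 - u2) powr q"
    "0 \<le> 2 powr r * \<bar>v3 - u3\<bar> powr q"
    by simp_all
  with 1 2 3 show ?thesis
    unfolding s_def[symmetric] ring_distribs mult.assoc[symmetric] by linarith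
qed

lemma exists_point_le_averages:
  fixes \<phi> \<psi> :: "'a \<Rightarrow> ennreal"
  assumes [measurable]: "\<phi> \<in> borel_measurable M" "\<psi> \<in> borel_measurable M" "B \<in> sets M"
    and measure_B: "emeasure M B = ennreal m" "0 < m"
    and pos: "0 < \<Theta>" "0 < G"
    and \<phi>: "(\<integral>\<^sup>+y\<in>B. \<phi> y \<partial>M) \<le> ennreal \<Theta>"
    and \<psi>: "(\<integral>\<^sup>+y\<in>B. \<psi> y \<partial>M) \<le> ennreal G"
  shows "\<exists>y\<in>B. \<phi> y \<le> ennreal (4 * \<Theta> / m) \<and> \<psi> y \<le> ennreal (4 * G / m)"
proof (rule ccontr)
  txt \<open>Otherwise \<open>a \<phi> + b \<psi> \<ge> 1\<close> on B, although its integral over B is at most m/2.\<close>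
  assume none: "\<not> (\<exists>y\<in>B. \<phi> y \<le> ennreal (4 * \<Theta> / m) \<and> \<psi> y \<le> ennreal (4 * G / m))"
  define a b where "a = ennreal (m / (4 * \<Theta>))" and "b = ennreal (m / (4 * G))"
  have scaled: "1 \<le> ennreal (m / (4 * t)) * x" if "0 < t" "ennreal (4 * t / m) \<le> x" for t x
  proof -
    have "ennreal (m / (4 * t)) * ennreal (4 * t / m) = 1"
      using that measure_B by (simp add: ennreal_mult''[symmetric])
    with that show ?thesis
      by (metis mult_left_mono zero_le)
  qed
  have bad: "1 \<le> a * \<phi> y + b * \<psi> y" if "y \<in> B" for y
  proof -
    from none that have "ennreal (4 * \<Theta> / m) \<le> \<phi> y \<or> ennreal (4 * G / m) \<le> \<psi> y"
      by force
    then show ?thesis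
      using scaled[of \<Theta> "\<phi> y"] scaled[of G "\<psi> y"] pos unfolding a_def b_def
      by (metis add_increasing add_increasing2 zero_le)
  qed
  have "ennreal m = (\<integral>\<^sup>+y\<in>B. 1 \<partial>M)"
    using measure_B by simp
  also have "\<dots> \<le> (\<integral>\<^sup>+y\<in>B. (a * \<phi> y + b * \<psi> y) \<partial>M)"
    using bad by (intro nn_integral_mono) (auto simp: indicator_def)
  also have "\<dots> = a * (\<integral>\<^sup>+y\<in>B. \<phi> y \<partial>M) + b * (\<integral>\<^sup>+y\<in>B. \<psi> y \<partial>M)"
    by (simp add: nn_set_integral_add nn_integral_cmult mult.assoc)
  also have "\<dots> \<le> a * ennreal \<Theta> + b * ennreal G"
    using \<phi> \<psi> by (intro add_mono mult_left_mono) auto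
  also have "\<dots> = ennreal (m / 2)"
    using measure_B pos by (simp add: a_def b_def ennreal_mult''[symmetric] ennreal_plus[symmetric] del: ennreal_plus)
  finally show False
    using measure_B by (simp add: ennreal_le_iff)
qed

lemma nn_set_integral_powr_le_oscillation_at:
  fixes f1 f2 :: "'a \<Rightarrow> 'b::euclidean_space" and f3 :: "'a \<Rightarrow> real"
  assumes [measurable]: "f1 \<in> borel_measurable M" "f2 \<in> borel_measurable M"
      "f3 \<in> borel_measurable M" "B \<in> sets M"
    and f3_nonneg: "\<And>z. 0 \<le> f3 z" and r: "0 \<le> r" "r \<le> q"
  shows "(\<integral>\<^sup>+z\<in>B. ennreal (norm (f1 z) powr r + norm (f2 z) powr r + f3 z powr r) \<partial>M)
    \<le> ennreal (3 * 2 powr r * (1 + (norm (f1 y) + norm (f2 y) + f3 y) powr r)) * emeasure M B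
      + ennreal (3 * 2 powr r) * (\<integral>\<^sup>+z\<in>B. ennreal (norm (f1 y - f1 z) powr q + norm (f2 y - f2 z) powr q
                                                  + \<bar>f3 y - f3 z\<bar> powr q) \<partial>M)"
    (is "_ \<le> ennreal ?a * _ + ennreal ?b * (\<integral>\<^sup>+z\<in>B. ennreal (?D z) \<partial>M)")
proof -
  have [measurable]: "?D \<in> borel_measurable M"
    by measurable
  have "norm (f1 z) powr r + norm (f2 z) powr r + f3 z powr r \<le> ?a + ?b * ?D z" for z
    using powr_sum_le_oscillation[of "f3 z" "f3 y" r q "f1 z" "f2 z" "f1 y" "f2 y"] f3_nonneg r
    by (simp add: ring_distribs)
  then have "(\<integral>\<^sup>+z\<in>B. ennreal (norm (f1 z) powr r + norm (f2 z) powr r + f3 z powr r) \<partial>M)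
      \<le> (\<integral>\<^sup>+z\<in>B. ennreal ?a + ennreal ?b * ennreal (?D z) \<partial>M)"
    by (intro nn_integral_mono mult_right_mono)
      (auto simp: ennreal_mult[symmetric] ennreal_plus[symmetric] intro!: ennreal_leI simp del: ennreal_plus)
  also have "\<dots> = (\<integral>\<^sup>+z\<in>B. ennreal ?a \<partial>M) + (\<integral>\<^sup>+z\<in>B. ennreal ?b * ennreal (?D z) \<partial>M)"
    by (rule nn_set_integral_add) measurable
  also have "\<dots> = ennreal ?a * emeasure M B + ennreal ?b * (\<integral>\<^sup>+z\<in>B. ennreal (?D z) \<partial>M)"
    by (simp add: nn_integral_cmult_indicator nn_integral_cmult mult.assoc)
  finally show ?thesis .
qed

definition Lr_oscillation_const :: "real \<Rightarrow> real \<Rightarrow> real \<Rightarrow> real" where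
  "Lr_oscillation_const r \<Theta> m = 3 * 2 powr r * (m + 4 * \<Theta> / m + m * (8 / m) powr r)"

lemma Lr_oscillation_const_bound:
  fixes m \<Theta> s G r :: real
  assumes "s \<le> (8 / m) powr r * (1 + G powr r)" "0 < m" "0 < \<Theta>"
  shows "3 * 2 powr r * ((1 + s) * m + 4 * \<Theta> / m) \<le> Lr_oscillation_const r \<Theta> m * (1 + G powr r)"
proof -
  have "(1 + s) * m + 4 * \<Theta> / m \<le> m + m * ((8 / m) powr r * (1 + G powr r)) + 4 * \<Theta> / m"
    using mult_left_mono[OF assms(1), of m] \<open>0 < m\<close> by (simp add: algebra_simps)
  also have "\<dots> \<le> (m + 4 * \<Theta> / m + m * (8 / m) powr r) * (1 + G powr r)"
  proof -
    have "0 \<le> (m + 4 * \<Theta> / m) * G powr r"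
      using assms by simp
    then show ?thesis
      by (simp add: algebra_simps add_divide_distrib)
  qed
  finally show ?thesis
    unfolding Lr_oscillation_const_def by (simp add: mult.assoc)
qed

lemma nn_set_integral_powr_le_oscillation:
  fixes f1 f2 :: "'a \<Rightarrow> 'b::euclidean_space" and f3 :: "'a \<Rightarrow> real"
  assumes "sigma_finite_measure M"
    and [measurable]: "f1 \<in> borel_measurable M" "f2 \<in> borel_measurable M"
      "f3 \<in> borel_measurable M" "B \<in> sets M"
    and f3_nonneg: "\<And>z. 0 \<le> f3 z"
    and measure_B: "emeasure M B = ennreal m" "0 < m"
    and r: "0 \<le> r" "r \<le> q" and "0 < \<Theta>" "0 \<le> G"
    and osc: "(\<integral>\<^sup>+y\<in>B. \<integral>\<^sup>+z\<in>B. ennreal (norm (f1 y - f1 z) powr q + norm (f2 y - f2 z) powr q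
                                            + \<bar>f3 y - f3 z\<bar> powr q) \<partial>M \<partial>M) \<le> ennreal \<Theta>"
    and L1: "(\<integral>\<^sup>+z\<in>B. ennreal (norm (f1 z) + norm (f2 z) + f3 z) \<partial>M) \<le> ennreal G"
  shows "(\<integral>\<^sup>+z\<in>B. ennreal (norm (f1 z) powr r + norm (f2 z) powr r + f3 z powr r) \<partial>M)
    \<le> ennreal (Lr_oscillation_const r \<Theta> m * (1 + G powr r))"
proof -
  interpret sigma_finite_measure M by fact
  define D where "D y z = norm (f1 y - f1 z) powr q + norm (f2 y - f2 z) powr q + \<bar>f3 y - f3 z\<bar> powr q"
    for y z
  define g where "g z = norm (f1 z) + norm (f2 z) + f3 z" for z
  have [measurable]: "(\<lambda>(y, z). ennreal (D y z) * indicator B z) \<in> borel_measurable (M \<Otimes>\<^sub>M M)"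
    unfolding D_def by measurable
  have [measurable]: "g \<in> borel_measurable M"
    unfolding g_def by measurable
  have "(\<integral>\<^sup>+z\<in>B. ennreal (g z) \<partial>M) \<le> ennreal (G + 1)"
    using L1 unfolding g_def by (rule order_trans) (intro ennreal_leI, simp)
  moreover have "(\<integral>\<^sup>+y\<in>B. \<integral>\<^sup>+z\<in>B. ennreal (D y z) \<partial>M \<partial>M) \<le> ennreal \<Theta>"
    using osc unfolding D_def .
  ultimately obtain y0 where "y0 \<in> B"
    and osc_y0: "(\<integral>\<^sup>+z\<in>B. ennreal (D y0 z) \<partial>M) \<le> ennreal (4 * \<Theta> / m)"
    and "ennreal (g y0) \<le> ennreal (4 * (G + 1) / m)"
    using exists_point_le_averages[of "\<lambda>y. \<integral>\<^sup>+z\<in>B. ennreal (D y z) \<partial>M" M "\<lambda>z. ennreal (g z)" B m \<Theta> "G + 1"]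
      measure_B \<open>0 < \<Theta>\<close> \<open>0 \<le> G\<close> by auto
  then have "g y0 \<le> 4 / m * (G + 1)"
    using measure_B \<open>0 \<le> G\<close> by (simp add: ennreal_le_iff)
  then have g_y0: "g y0 powr r \<le> (8 / m) powr r * (1 + G powr r)"
    using powr_le_scaled_one_plus_powr[of "g y0" "4 / m" G r] measure_B \<open>0 \<le> G\<close> r f3_nonneg
    by (simp add: g_def)
  have "(\<integral>\<^sup>+z\<in>B. ennreal (norm (f1 z) powr r + norm (f2 z) powr r + f3 z powr r) \<partial>M)
      \<le> ennreal (3 * 2 powr r * (1 + g y0 powr r)) * ennreal m
        + ennreal (3 * 2 powr r) * (\<integral>\<^sup>+z\<in>B. ennreal (D y0 z) \<partial>M)"
    using nn_set_integral_powr_le_oscillation_at[of f1 M f2 f3 B r q y0] f3_nonneg r measure_B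
    unfolding g_def D_def by simp
  also have "\<dots> \<le> ennreal (3 * 2 powr r * (1 + g y0 powr r)) * ennreal m
      + ennreal (3 * 2 powr r) * ennreal (4 * \<Theta> / m)"
    using osc_y0 by (intro add_mono mult_left_mono) auto
  also have "\<dots> = ennreal (3 * 2 powr r * ((1 + g y0 powr r) * m + 4 * \<Theta> / m))"
    using measure_B \<open>0 < \<Theta>\<close>
    by (simp add: ennreal_mult'[symmetric] ennreal_plus[symmetric] distrib_left mult.assoc del: ennreal_plus)
  also have "\<dots> \<le> ennreal (Lr_oscillation_const r \<Theta> m * (1 + G powr r))"
    using g_y0 measure_B \<open>0 < \<Theta>\<close> by (intro ennreal_leI Lr_oscillation_const_bound)
  finally show ?thesis .
qed

lemma nn_set_integral_le_sum_cover:
  fixes f :: "'a \<Rightarrow> ennreal"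
  assumes "finite K" "A \<subseteq> (\<Union>x\<in>K. U x)" "\<And>x. x \<in> K \<Longrightarrow> U x \<in> sets M"
    and "f \<in> borel_measurable M"
  shows "(\<integral>\<^sup>+z\<in>A. f z \<partial>M) \<le> (\<Sum>x\<in>K. \<integral>\<^sup>+z\<in>U x. f z \<partial>M)"
proof -
  have "f z * indicator A z \<le> (\<Sum>x\<in>K. f z * indicator (U x) z)" for z
  proof (cases "z \<in> A")
    case True
    then obtain x where "x \<in> K" "z \<in> U x"
      using assms(2) by blast
    then have "f z * indicator A z = f z * indicator (U x) z"
      using True by simp
    also have "\<dots> \<le> (\<Sum>x\<in>K. f z * indicator (U x) z)"
      using \<open>x \<in> K\<close> \<open>finite K\<close> by (intro member_le_sum) auto
    finally show ?thesis .
  qed simp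
  then have "(\<integral>\<^sup>+z\<in>A. f z \<partial>M) \<le> (\<integral>\<^sup>+z. (\<Sum>x\<in>K. f z * indicator (U x) z) \<partial>M)"
    by (intro nn_integral_mono)
  also have "\<dots> = (\<Sum>x\<in>K. \<integral>\<^sup>+z\<in>U x. f z \<partial>M)"
    using assms(3,4) by (intro nn_integral_sum) auto
  finally show ?thesis .
qed

lemma nn_set_integral_ball_le_unit_ball_translate:
  fixes f :: "'a::euclidean_space \<Rightarrow> ennreal"
  assumes [measurable]: "f \<in> borel_measurable borel" and "\<rho> \<le> 1"
  shows "(\<integral>\<^sup>+z\<in>ball x \<rho>. f z \<partial>lborel) \<le> (\<integral>\<^sup>+y\<in>ball 0 1. f (x + y) \<partial>lborel)"
proof -
  have "(\<integral>\<^sup>+z\<in>ball x \<rho>. f z \<partial>lborel) \<le> (\<integral>\<^sup>+z\<in>ball x 1. f z \<partial>lborel)"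
    using \<open>\<rho> \<le> 1\<close> by (intro nn_set_integral_set_mono) auto
  also have "\<dots> = (\<integral>\<^sup>+z. f z * indicator (ball x 1) z \<partial>distr lborel borel ((+) x))"
    by (simp add: lborel_distr_plus)
  also have "\<dots> = (\<integral>\<^sup>+y. f (x + y) * indicator (ball x 1) (x + y) \<partial>lborel)"
    by (subst nn_integral_distr) (auto intro!: borel_measurable_times_ennreal borel_measurable_indicator)
  also have "\<dots> = (\<integral>\<^sup>+y\<in>ball 0 1. f (x + y) \<partial>lborel)"
    by (intro nn_integral_cong) (auto simp: indicator_def dist_norm)
  finally show ?thesis .
qed

lemma nn_set_integral_powr_le_cover:
  fixes f1 f2 :: "'a::euclidean_space \<Rightarrow> 'b::euclidean_space" and f3 :: "'a \<Rightarrow> real"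
    and \<rho> :: real
  defines "F x \<equiv> \<integral>\<^sup>+y\<in>ball 0 1. ennreal (norm (f1 (x + y)) + norm (f2 (x + y)) + f3 (x + y)) \<partial>lborel"
    and "m \<equiv> measure lborel (ball (0::'a) \<rho>)"
  assumes [measurable]: "f1 \<in> borel_measurable borel" "f2 \<in> borel_measurable borel"
      "f3 \<in> borel_measurable borel"
    and f3_nonneg: "\<And>z. 0 \<le> f3 z"
    and r: "0 \<le> r" "r \<le> q" and "0 < \<Theta>" "0 < \<rho>" "\<rho> \<le> 1"
    and cover: "finite K" "A \<subseteq> (\<Union>x\<in>K. ball x \<rho>)"
    and osc: "\<And>x. x \<in> K \<Longrightarrow>
      (\<integral>\<^sup>+y\<in>ball x \<rho>. \<integral>\<^sup>+z\<in>ball x \<rho>. ennreal (norm (f1 y - f1 z) powr q + norm (f2 y - f2 z) powr q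
                                            + \<bar>f3 y - f3 z\<bar> powr q) \<partial>lborel \<partial>lborel) \<le> ennreal \<Theta>"
    and F_finite: "\<And>x. x \<in> K \<Longrightarrow> F x < \<infinity>"
  shows "(\<integral>\<^sup>+z\<in>A. ennreal (norm (f1 z) powr r + norm (f2 z) powr r + f3 z powr r) \<partial>lborel)
    \<le> (\<Sum>x\<in>K. ennreal (Lr_oscillation_const r \<Theta> m * (1 + enn2real (F x) powr r)))"
proof -
  have "0 < m"
    unfolding m_def using \<open>0 < \<rho>\<close> by (rule content_ball_pos)
  have emeasure_ball_eq: "emeasure lborel (ball x \<rho>) = ennreal m" for x :: 'a
    unfolding m_def using \<open>0 < \<rho>\<close> by (simp add: measure_def emeasure_ball)
  have "(\<integral>\<^sup>+z\<in>A. ennreal (norm (f1 z) powr r + norm (f2 z) powr r + f3 z powr r) \<partial>lborel)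
      \<le> (\<Sum>x\<in>K. \<integral>\<^sup>+z\<in>ball x \<rho>. ennreal (norm (f1 z) powr r + norm (f2 z) powr r + f3 z powr r) \<partial>lborel)"
    using cover by (intro nn_set_integral_le_sum_cover) auto
  also have "\<dots> \<le> (\<Sum>x\<in>K. ennreal (Lr_oscillation_const r \<Theta> m * (1 + enn2real (F x) powr r)))"
  proof (intro sum_mono nn_set_integral_powr_le_oscillation[OF lborel.sigma_finite_measure_axioms])
    fix x assume "x \<in> K"
    have "(\<integral>\<^sup>+z\<in>ball x \<rho>. ennreal (norm (f1 z) + norm (f2 z) + f3 z) \<partial>lborel) \<le> F x"
      unfolding F_def using \<open>\<rho> \<le> 1\<close> by (intro nn_set_integral_ball_le_unit_ball_translate) auto
    also have "\<dots> = ennreal (enn2real (F x))"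
      using F_finite[OF \<open>x \<in> K\<close>] by simp
    finally show "(\<integral>\<^sup>+z\<in>ball x \<rho>. ennreal (norm (f1 z) + norm (f2 z) + f3 z) \<partial>lborel)
        \<le> ennreal (enn2real (F x))" .
  qed (use f3_nonneg r \<open>0 < \<Theta>\<close> \<open>0 < m\<close> emeasure_ball_eq osc in auto)
  finally show ?thesis .
qed

lemma nn_set_integral_finite_of_AE_le_sum_affine:
  fixes g :: "'b \<Rightarrow> 'a \<Rightarrow> real" and H :: "'a \<Rightarrow> ennreal"
  assumes H_le: "AE t\<in>I in M. H t \<le> (\<Sum>x\<in>K. ennreal (C * (1 + g x t)))"
    and "finite K" "I \<in> sets M" "emeasure M I < \<infinity>" "0 \<le> C"
    and g_meas: "\<And>x. x \<in> K \<Longrightarrow> g x \<in> borel_measurable M"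
    and g_nonneg: "\<And>x t. 0 \<le> g x t"
    and g_int: "\<And>x. x \<in> K \<Longrightarrow> (\<integral>\<^sup>+t\<in>I. ennreal (g x t) \<partial>M) < \<infinity>"
  shows "(\<integral>\<^sup>+t\<in>I. H t \<partial>M) < \<infinity>"
proof -
  have "(\<integral>\<^sup>+t\<in>I. H t \<partial>M) \<le> (\<integral>\<^sup>+t\<in>I. (\<Sum>x\<in>K. ennreal (C * (1 + g x t))) \<partial>M)"
    using H_le by (intro nn_integral_mono_AE) (auto elim!: eventually_mono split: split_indicator)
  also have "\<dots> = (\<Sum>x\<in>K. \<integral>\<^sup>+t\<in>I. ennreal C + ennreal C * ennreal (g x t) \<partial>M)"
    using \<open>0 \<le> C\<close> g_nonneg g_meas \<open>I \<in> sets M\<close>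
    by (subst nn_integral_sum[symmetric])
      (auto simp: sum_distrib_right ennreal_mult ring_distribs)
  also have "\<dots> = (\<Sum>x\<in>K. ennreal C * emeasure M I + ennreal C * (\<integral>\<^sup>+t\<in>I. ennreal (g x t) \<partial>M))"
    using g_meas \<open>I \<in> sets M\<close>
    by (intro sum.cong refl)
      (simp add: nn_set_integral_add nn_integral_cmult nn_integral_cmult_indicator mult.assoc)
  also have "\<dots> < \<infinity>"
    using assms by (simp add: ennreal_mult_less_top)
  finally show ?thesis .
qed

lemma borel_measurable_nn_set_integral_lborel:
  fixes f :: "'a::euclidean_space \<Rightarrow> 'b::euclidean_space \<Rightarrow> ennreal"
  assumes [measurable]: "(\<lambda>(t, y). f t y) \<in> borel_measurable (borel \<Otimes>\<^sub>M borel)" "A \<in> sets borel"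
  shows "(\<lambda>t. \<integral>\<^sup>+y\<in>A. f t y \<partial>lborel) \<in> borel_measurable lborel"
proof -
  have "sets (lborel \<Otimes>\<^sub>M lborel :: ('a \<times> 'b) measure) = sets (borel \<Otimes>\<^sub>M borel)"
    by (intro sets_pair_measure_cong) simp_all
  then have "(\<lambda>(t, y). f t y * indicator A y) \<in> borel_measurable (lborel \<Otimes>\<^sub>M lborel)"
    by (subst measurable_cong_sets[OF _ refl]) measurable
  then show ?thesis
    by (rule lborel.borel_measurable_nn_integral[where f="\<lambda>t y. f t y * indicator A y", simplified])
qed

lemma nn_set_integral_time_powr_finite_of_oscillation:
  fixes f1 f2 :: "real \<Rightarrow> 'a::euclidean_space \<Rightarrow> 'b::euclidean_space" and f3 :: "real \<Rightarrow> 'a \<Rightarrow> real"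
    and \<rho> :: real
  defines "F x t \<equiv> \<integral>\<^sup>+y\<in>ball 0 1. ennreal (norm (f1 t (x + y)) + norm (f2 t (x + y)) + f3 t (x + y)) \<partial>lborel"
  assumes [measurable]: "(\<lambda>(t, x). f1 t x) \<in> borel_measurable (borel \<Otimes>\<^sub>M borel)"
      "(\<lambda>(t, x). f2 t x) \<in> borel_measurable (borel \<Otimes>\<^sub>M borel)"
      "(\<lambda>(t, x). f3 t x) \<in> borel_measurable (borel \<Otimes>\<^sub>M borel)"
    and f3_nonneg: "\<And>t x. 0 \<le> f3 t x"
    and r: "0 \<le> r" "r \<le> q" and "0 < \<Theta>" "0 < \<rho>" "\<rho> \<le> 1" and "bounded A"
    and I: "I \<in> sets lborel" "emeasure lborel I < \<infinity>"
    and osc: "\<And>t x.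
      (\<integral>\<^sup>+y\<in>ball x \<rho>. \<integral>\<^sup>+z\<in>ball x \<rho>. ennreal (norm (f1 t y - f1 t z) powr q + norm (f2 t y - f2 t z) powr q
                                            + \<bar>f3 t y - f3 t z\<bar> powr q) \<partial>lborel \<partial>lborel) \<le> ennreal \<Theta>"
    and F_finite: "\<And>x. AE t\<in>I in lborel. F x t < \<infinity>"
    and F_powr_int: "\<And>x. (\<integral>\<^sup>+t\<in>I. ennreal (enn2real (F x t) powr r) \<partial>lborel) < \<infinity>"
  shows "(\<integral>\<^sup>+t\<in>I. \<integral>\<^sup>+x\<in>A.
           ennreal (norm (f1 t x) powr r + norm (f2 t x) powr r + f3 t x powr r) \<partial>lborel \<partial>lborel) < \<infinity>"
proof -
  have "compact (closure A)"
    using \<open>bounded A\<close> by (simp add: compact_closure)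
  then obtain P where P: "finite P" "A \<subseteq> (\<Union>x\<in>P. ball x \<rho>)"
    using \<open>0 < \<rho>\<close> closure_subset[of A] unfolding compact_eq_totally_bounded by (meson order_trans)
  define C where "C = Lr_oscillation_const r \<Theta> (measure lborel (ball (0::'a) \<rho>))"
  have [measurable]: "F x \<in> borel_measurable lborel" for x
    unfolding F_def by (rule borel_measurable_nn_set_integral_lborel) measurable
  have "AE t in lborel. \<forall>x\<in>P. t \<in> I \<longrightarrow> F x t < \<infinity>"
    using F_finite \<open>finite P\<close> by (intro eventually_ball_finite) auto
  then have "AE t\<in>I in lborel.
      (\<integral>\<^sup>+x\<in>A. ennreal (norm (f1 t x) powr r + norm (f2 t x) powr r + f3 t x powr r) \<partial>lborel)
        \<le> (\<Sum>x\<in>P. ennreal (C * (1 + enn2real (F x t) powr r)))"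
  proof eventually_elim
    case (elim t)
    show ?case
      unfolding C_def F_def
      using elim osc f3_nonneg r \<open>0 < \<Theta>\<close> \<open>0 < \<rho>\<close> \<open>\<rho> \<le> 1\<close> P
      by (intro impI nn_set_integral_powr_le_cover) (auto simp: F_def)
  qed
  then show ?thesis
  proof (rule nn_set_integral_finite_of_AE_le_sum_affine)
    show "(\<lambda>t. enn2real (F x t) powr r) \<in> borel_measurable lborel" for x
      by measurable
  qed (use P F_powr_int I \<open>0 < \<Theta>\<close> \<open>0 < \<rho>\<close> in \<open>auto simp: C_def Lr_oscillation_const_def\<close>)
qed

theorem lemma6p1:
  fixes p q K \<rho>\<^sub>0 \<rho>\<^sub>1 \<gamma> \<tau> R :: real
    and a :: "real \<Rightarrow> real^'n \<Rightarrow> 'n \<Rightarrow> 'n \<Rightarrow> real"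
    and fb b :: "real \<Rightarrow> real^'n \<Rightarrow> real^'n"
    and c :: "real \<Rightarrow> real^'n \<Rightarrow> real"
  assumes "1 < p"
    and "q > min (real CARD('n)) p" and "q > min (real CARD('n)) (conj_exp p)"
    and "q \<ge> max (real CARD('n)) (max p (conj_exp p))"
    and "K \<ge> 0" and "0 < \<rho>\<^sub>0" "\<rho>\<^sub>0 \<le> 1" and "0 < \<rho>\<^sub>1" "\<rho>\<^sub>1 \<le> 1"
    and "0 < \<gamma>" "\<gamma> \<le> 1"
    and "assumptionA p a fb b c"
    and "assumptionB q K \<rho>\<^sub>1 \<gamma> fb b c"
    and "assumptionC \<rho>\<^sub>0 \<gamma> a"
    and "0 < \<tau>" and "0 < R"
  shows "(\<integral>\<^sup>+ s \<in> {-\<tau>..\<tau>}. \<integral>\<^sup>+ x \<in> ball (0::real^'n) R.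
            ennreal (norm (fb s x) powr conj_exp p + norm (b s x) powr conj_exp p
                     + c s x powr conj_exp p) \<partial>lborel \<partial>lborel) < \<infinity>"
proof -
  define \<Theta> where "\<Theta> = K * (if q > real CARD('n) then 1 else 0) + \<rho>\<^sub>1 ^ CARD('n) * \<gamma>"
  have "0 < \<Theta>"
    unfolding \<Theta>_def using assms(5,8,10) by (intro add_nonneg_pos) auto
  have r: "0 \<le> conj_exp p" "conj_exp p \<le> q"
    using assms(1,4) by (auto simp: conj_exp_def)
  note A = assms(12)[unfolded assumptionA_def borel_prod[symmetric] Let_def]
  show ?thesis
  proof (rule nn_set_integral_time_powr_finite_of_oscillation[where \<rho>=\<rho>\<^sub>1 and \<Theta>=\<Theta>])
    show "(\<integral>\<^sup>+y\<in>ball x \<rho>\<^sub>1. \<integral>\<^sup>+z\<in>ball x \<rho>\<^sub>1. ennreal (norm (fb t y - fb t z) powr q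
        + norm (b t y - b t z) powr q + \<bar>c t y - c t z\<bar> powr q) \<partial>lborel \<partial>lborel) \<le> ennreal \<Theta>" for t x
      using assms(13) unfolding assumptionB_def \<Theta>_def by blast
  qed (use A r \<open>0 < \<Theta>\<close> assms(8,9,15) in \<open>(blast | simp add: emeasure_lborel_Icc)+\<close>)
qed

end
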